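(* Let $A\in\mathbb{R}^{n\times n}$ be Metzler and Hurwitz stable, $b_0\in\mathbb{R}^n_{\ge0}$, and $\mu,\theta>0$ with $r:=\mu/\theta<g_0:=-e_n^TA^{-1}b_0$. Let $g_n:=-e_n^TA^{-1}e_n$ and $u_*:=(g_0-r)/(g_nr)$. Then for all $\eta,k_p>0$ the unique equilibrium $$(x^*,z_1^*,z_2^* )=\Big(-A^{-1}(b_0-ru_*e_n),\ \frac{\mu}{\eta u_*},\ \frac{u_*}{k_p}\Big)$$ of the system $\dot x=Ax-k_px_nz_2e_n+b_0$, $\dot z_1=\mu-k_p\eta z_1z_2$, $\dot z_2=\theta x_n-k_p\eta z_1z_2$ is locally exponentially stable.
   Context: Metzler: all off-diagonal entries nonnegative. Hurwitz stable: all eigenvalues have negative real part. $e_i$: standard basis vectors of $\mathbb{R}^n$; $x_n=e_n^Tx$. An equilibrium is called locally exponentially stable here if the Jacobian matrix of the vector field at the equilibrium is Hurwitz stable. *)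

theory Defs
  imports "HOL-Analysis.Derivative" "Jordan_Normal_Form.Matrix" "Jordan_Normal_Form.Char_Poly"
begin

(* Indices are 0-based: the standard basis vector e_n of R^n is unit_vec n (n-1),
   and x_n = x $ (n-1). *)

definition metzler :: "real mat \<Rightarrow> bool" where
  "metzler A \<longleftrightarrow> dim_row A = dim_col A \<and>
     (\<forall>i < dim_row A. \<forall>j < dim_col A. i \<noteq> j \<longrightarrow> A $$ (i,j) \<ge> 0)"

definition hurwitz :: "real mat \<Rightarrow> bool" where
  "hurwitz A \<longleftrightarrow> dim_row A = dim_col A \<and>
     (\<forall>l. eigenvalue (map_mat complex_of_real A) l \<longrightarrow> Re l < 0)"

definition minv :: "real mat \<Rightarrow> real mat" where
  "minv A = (SOME B. B \<in> carrier_mat (dim_row A) (dim_row A) \<and>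
                     A * B = 1\<^sub>m (dim_row A) \<and> B * A = 1\<^sub>m (dim_row A))"

definition jacobian :: "(real vec \<Rightarrow> real vec) \<Rightarrow> real vec \<Rightarrow> real mat" where
  "jacobian F w = mat (dim_vec w) (dim_vec w)
     (\<lambda>(i,j). deriv (\<lambda>t. F (w + t \<cdot>\<^sub>v unit_vec (dim_vec w) j) $ i) 0)"

(* State w \<in> R^(n+2): w$i = x_(i+1) for i<n, w$n = z1, w$(n+1) = z2. *)
definition field :: "nat \<Rightarrow> real mat \<Rightarrow> real vec \<Rightarrow> real \<Rightarrow> real \<Rightarrow> real \<Rightarrow> real
                      \<Rightarrow> real vec \<Rightarrow> real vec" where
  "field n A b0 mu theta eta kp w =
     (let x = vec n (\<lambda>i. w $ i); z1 = w $ n; z2 = w $ (n+1); xn = w $ (n-1) in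
      vec (n+2) (\<lambda>i. if i < n then
                        (A *\<^sub>v x) $ i - kp * xn * z2 * (unit_vec n (n-1)) $ i + b0 $ i
                      else if i = n then mu - kp * eta * z1 * z2
                      else theta * xn - kp * eta * z1 * z2))"

end

theory Submission
  imports Defs "Jordan_Normal_Form.Spectral_Radius"
begin

text \<open>A Metzler Hurwitz matrix A admits no nonzero y \<ge> 0 with A y \<ge> 0: for large s and some t > 1
  the matrix (t/s)(A + s I) is nonnegative with bounded powers, yet it would multiply such a y by at
  least t.  Hence A is invertible and A^-1 is nonpositive with negative diagonal, so g_n > 0 and
  u_* > 0; solving the z-equations (which force x_n = r) and then the x-equations gives the unique
  equilibrium.  For stability, let (v, p, q) be an eigenvector of the Jacobian for an eigenvalue l
  with Re l \<ge> 0.  The triangle inequality turns the x-rows into A |v| \<ge> 0, except in the row of x_n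
  that carries the feedback.  If v_n = 0 this forces v = 0 and then p = q = 0.  Otherwise
  Phi = -g q / v_n has positive real part, and eliminating p and v_n from the z-rows gives
  theta g / Phi + l + l d / (l + c) = 0, although the left side has positive real part.\<close>

(* Matrix and HOL-Analysis both use $ for vector indexing; dropping the latter avoids
   exponentially many parses of every formula with several indices. *)
unbundle no vec_syntax

lemma mult_mat_vec_index_sum:
  assumes "A \<in> carrier_mat n m" "v \<in> carrier_vec m" "i < n"
  shows "(A *\<^sub>v v) $ i = (\<Sum>k<m. A $$ (i,k) * v $ k)"
  using assms by (auto simp: scalar_prod_def atLeast0LessThan intro!: sum.cong)

lemma smult_shift_mult_mat_vec:
  fixes B :: "'a::field mat"
  assumes "B \<in> carrier_mat n n" "v \<in> carrier_vec n"
  shows "(c \<cdot>\<^sub>m (B + s \<cdot>\<^sub>m 1\<^sub>m n)) *\<^sub>v v = c \<cdot>\<^sub>v (B *\<^sub>v v + s \<cdot>\<^sub>v v)"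
  using assms by (intro eq_vecI) (auto simp: add_scalar_prod_distrib[of _ n] algebra_simps)

lemma eigenvalue_smult_shift:
  fixes B :: "'a::field mat"
  assumes B: "B \<in> carrier_mat n n" and c: "c \<noteq> 0"
    and ev: "eigenvalue (c \<cdot>\<^sub>m (B + s \<cdot>\<^sub>m 1\<^sub>m n)) \<mu>"
  shows "eigenvalue B (\<mu> / c - s)"
proof -
  obtain v where v: "v \<in> carrier_vec n" "v \<noteq> 0\<^sub>v n" "(c \<cdot>\<^sub>m (B + s \<cdot>\<^sub>m 1\<^sub>m n)) *\<^sub>v v = \<mu> \<cdot>\<^sub>v v"
    using ev B unfolding eigenvalue_def eigenvector_def by auto
  have Bv: "c \<cdot>\<^sub>v (B *\<^sub>v v + s \<cdot>\<^sub>v v) = \<mu> \<cdot>\<^sub>v v"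
    using v(3) smult_shift_mult_mat_vec[OF B v(1)] by simp
  have "B *\<^sub>v v = (\<mu> / c - s) \<cdot>\<^sub>v v"
  proof (rule eq_vecI)
    fix i assume "i < dim_vec ((\<mu> / c - s) \<cdot>\<^sub>v v)"
    then have i: "i < n" using v by simp
    have "c * ((B *\<^sub>v v) $ i + s * v $ i) = \<mu> * v $ i"
      using arg_cong[OF Bv, of "\<lambda>u. u $ i"] i B v(1) by simp
    then show "(B *\<^sub>v v) $ i = ((\<mu> / c - s) \<cdot>\<^sub>v v) $ i"
      using i v(1) c by (auto simp: field_simps)
  qed (use B v in simp)
  then show ?thesis unfolding eigenvalue_def eigenvector_def using B v by auto
qed

lemma cmod_of_real_add_less:
  assumes l: "Re l < 0" and s: "(cmod l)\<^sup>2 / (- 2 * Re l) < s"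
  shows "cmod (complex_of_real s + l) < s"
proof -
  have pos: "- 2 * Re l > 0" using l by simp
  then have "(cmod l)\<^sup>2 < s * (- 2 * Re l)" using s pos_divide_less_eq by blast
  then have "(cmod (complex_of_real s + l))\<^sup>2 < s\<^sup>2"
    unfolding cmod_power2 by (simp add: power2_eq_square algebra_simps)
  moreover have "s > 0" using s divide_nonneg_pos[OF zero_le_power2[of "cmod l"] pos] by linarith
  ultimately show ?thesis by (simp add: power_less_imp_less_base)
qed

lemma spectral_radius_smult_shift_less_1:
  fixes B :: "complex mat"
  assumes B: "B \<in> carrier_mat n n" and n: "n > 0" and s: "s > 0" and t: "t > 0"
    and m: "\<And>l. eigenvalue B l \<Longrightarrow> cmod (complex_of_real s + l) / s \<le> m" and tm: "t * m < 1"
  shows "spectral_radius (complex_of_real (t / s) \<cdot>\<^sub>m (B + complex_of_real s \<cdot>\<^sub>m 1\<^sub>m n)) < 1"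
proof -
  let ?C = "complex_of_real (t / s) \<cdot>\<^sub>m (B + complex_of_real s \<cdot>\<^sub>m 1\<^sub>m n)"
  have C: "?C \<in> carrier_mat n n" using B by simp
  have "cmod \<mu> < 1" if "\<mu> \<in> spectrum ?C" for \<mu>
  proof -
    let ?\<nu> = "\<mu> / complex_of_real (t / s)"
    have "eigenvalue B (?\<nu> - complex_of_real s)"
      using that s t by (intro eigenvalue_smult_shift[OF B]) (auto simp: spectrum_def)
    then have "cmod (complex_of_real s + (?\<nu> - complex_of_real s)) / s \<le> m" by (rule m)
    then have "cmod ?\<nu> / s \<le> m" by (simp only: add_diff_eq add_diff_cancel_left')
    moreover have "cmod ?\<nu> / s = cmod \<mu> / t"
      using s t by (simp add: norm_divide norm_mult abs_of_pos field_simps)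
    ultimately have "cmod \<mu> / t \<le> m" by linarith
    then have "cmod \<mu> \<le> t * m" using t by (simp add: divide_le_eq mult.commute)
    then show ?thesis using tm by simp
  qed
  then show ?thesis
    unfolding spectral_radius_def using card_finite_spectrum[OF C] spectrum_non_empty[OF C n]
    by (subst Max_less_iff) auto
qed

lemma hurwitz_smult_shift_spectral_radius:
  fixes A :: "real mat"
  assumes A: "A \<in> carrier_mat n n" and hur: "hurwitz A" and n: "n > 0" and s0: "s0 \<ge> 0"
  obtains s t where "s > s0" "t > 1"
    "spectral_radius (map_mat complex_of_real ((t / s) \<cdot>\<^sub>m (A + s \<cdot>\<^sub>m 1\<^sub>m n))) < 1"
proof -
  define Ac where "Ac = map_mat complex_of_real A"
  have Ac: "Ac \<in> carrier_mat n n" using A by (simp add: Ac_def)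
  define S where "S = spectrum Ac"
  have S_finite: "finite S" using card_finite_spectrum[OF Ac] by (simp add: S_def)
  have S_Re: "Re l < 0" if "l \<in> S" for l
    using hur that unfolding hurwitz_def S_def spectrum_def Ac_def by auto
  define s where "s = s0 + 1 + (\<Sum>l\<in>S. (cmod l)\<^sup>2 / (- 2 * Re l))"
  have "(\<Sum>l\<in>S. (cmod l)\<^sup>2 / (- 2 * Re l)) \<ge> 0"
    using S_Re by (intro sum_nonneg divide_nonneg_pos) auto
  then have s: "s > s0" "s > 0" using s0 by (auto simp: s_def)
  have shifted_inside: "cmod (complex_of_real s + l) < s" if l: "l \<in> S" for l
  proof (rule cmod_of_real_add_less[OF S_Re[OF l]])
    have "(cmod l)\<^sup>2 / (- 2 * Re l) \<le> (\<Sum>l\<in>S. (cmod l)\<^sup>2 / (- 2 * Re l))"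
      using S_finite S_Re l by (intro member_le_sum divide_nonneg_pos) auto
    then show "(cmod l)\<^sup>2 / (- 2 * Re l) < s" using s0 unfolding s_def by linarith
  qed
  define m where "m = Max (insert (1/2) ((\<lambda>l. cmod (complex_of_real s + l) / s) ` S))"
  have "m < 1" unfolding m_def using S_finite shifted_inside s by (subst Max_less_iff) auto
  moreover have "m \<ge> 1/2" unfolding m_def by (rule Max_ge) (use S_finite in auto)
  ultimately have m: "m < 1" "m \<ge> 1/2" by simp_all
  define t where "t = 2 / (1 + m)"
  have t: "t > 1" "t * m < 1" using m by (simp_all add: t_def field_simps)
  have m_ge: "cmod (complex_of_real s + l) / s \<le> m" if "eigenvalue Ac l" for l
    unfolding m_def using S_finite that by (intro Max_ge) (auto simp: S_def spectrum_def)
  have "spectral_radius (complex_of_real (t / s) \<cdot>\<^sub>m (Ac + complex_of_real s \<cdot>\<^sub>m 1\<^sub>m n)) < 1"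
    by (rule spectral_radius_smult_shift_less_1[OF Ac n s(2) _ m_ge t(2)]) (use t in simp)
  moreover have "map_mat complex_of_real ((t / s) \<cdot>\<^sub>m (A + s \<cdot>\<^sub>m 1\<^sub>m n))
      = complex_of_real (t / s) \<cdot>\<^sub>m (Ac + complex_of_real s \<cdot>\<^sub>m 1\<^sub>m n)"
    using A by (intro eq_matI) (auto simp: Ac_def)
  ultimately show ?thesis using that s(1) t(1) by simp
qed

lemma nonneg_mat_pow_mult_vec_ge:
  fixes C :: "real mat" and z :: "real vec"
  assumes C: "C \<in> carrier_mat n n" and C_nonneg: "\<forall>i<n. \<forall>j<n. C $$ (i,j) \<ge> 0" and t: "t \<ge> 0"
    and z: "z \<in> carrier_vec n" and z_nonneg: "\<forall>i<n. z $ i \<ge> 0"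
    and Cz: "\<forall>i<n. (C *\<^sub>v z) $ i \<ge> t * z $ i"
  shows "\<forall>i<n. (C ^\<^sub>m k *\<^sub>v z) $ i \<ge> t ^ k * z $ i"
  using z z_nonneg Cz
proof (induction k arbitrary: z)
  case 0
  then show ?case using C by simp
next
  case (Suc k)
  define z' where "z' = C *\<^sub>v z"
  have z': "z' \<in> carrier_vec n" unfolding z'_def using C Suc.prems(1) by simp
  have z'_ge: "t * z $ i \<le> z' $ i" if "i < n" for i
    using Suc.prems(3) that by (simp add: z'_def)
  have z'_nonneg: "\<forall>i<n. z' $ i \<ge> 0"
    using Suc.prems(2) t z'_ge by (meson mult_nonneg_nonneg order_trans)
  have "\<forall>i<n. (C *\<^sub>v z') $ i \<ge> t * z' $ i"
  proof (intro allI impI)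
    fix i assume i: "i < n"
    have "t * z' $ i = (\<Sum>k<n. C $$ (i,k) * (t * z $ k))"
      unfolding z'_def using mult_mat_vec_index_sum[OF C Suc.prems(1) i]
      by (simp add: sum_distrib_left algebra_simps)
    also have "\<dots> \<le> (\<Sum>k<n. C $$ (i,k) * z' $ k)"
      using C_nonneg i z'_ge by (intro sum_mono mult_left_mono) auto
    also have "\<dots> = (C *\<^sub>v z') $ i" using mult_mat_vec_index_sum[OF C z' i] by simp
    finally show "t * z' $ i \<le> (C *\<^sub>v z') $ i" .
  qed
  from Suc.IH[OF z' z'_nonneg this]
  have IH: "\<forall>i<n. t ^ k * z' $ i \<le> (C ^\<^sub>m k *\<^sub>v z') $ i" .
  have "C ^\<^sub>m Suc k *\<^sub>v z = C ^\<^sub>m k *\<^sub>v z'"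
    unfolding z'_def using C Suc.prems(1) by (simp add: assoc_mult_mat_vec[of _ n n _ n])
  moreover have "t ^ Suc k * z $ i \<le> t ^ k * z' $ i" if "i < n" for i
    using mult_left_mono[OF z'_ge[OF that], of "t ^ k"] t by (simp add: algebra_simps)
  ultimately show ?case using IH by (metis order_trans)
qed

lemma nonneg_mat_bounded_powers_no_expanding_vec:
  fixes C :: "real mat" and y :: "real vec"
  assumes C: "C \<in> carrier_mat n n" and C_nonneg: "\<forall>i<n. \<forall>j<n. C $$ (i,j) \<ge> 0"
    and bounded: "\<And>k i j. i < n \<Longrightarrow> j < n \<Longrightarrow> (C ^\<^sub>m k) $$ (i,j) \<le> c"
    and t: "t > 1" and y: "y \<in> carrier_vec n" and y_nonneg: "\<forall>i<n. y $ i \<ge> 0"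
    and Cy: "\<forall>i<n. (C *\<^sub>v y) $ i \<ge> t * y $ i"
  shows "\<forall>i<n. y $ i = 0"
proof (intro allI impI)
  fix i assume i: "i < n"
  have growth: "t ^ k * y $ i \<le> c * (\<Sum>j<n. y $ j)" for k
  proof -
    have "t ^ k * y $ i \<le> (C ^\<^sub>m k *\<^sub>v y) $ i"
      using nonneg_mat_pow_mult_vec_ge[OF C C_nonneg _ y y_nonneg Cy] t i by auto
    also have "\<dots> = (\<Sum>j<n. (C ^\<^sub>m k) $$ (i,j) * y $ j)"
      by (rule mult_mat_vec_index_sum[OF pow_carrier_mat[OF C] y i])
    also have "\<dots> \<le> (\<Sum>j<n. c * y $ j)"
      using bounded i y_nonneg by (intro sum_mono mult_right_mono) auto
    finally show ?thesis by (simp add: sum_distrib_left)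
  qed
  show "y $ i = 0"
  proof (rule ccontr)
    assume "y $ i \<noteq> 0"
    with y_nonneg i have pos: "y $ i > 0" by force
    obtain k where "c * (\<Sum>j<n. y $ j) / y $ i < t ^ k" using real_arch_pow[OF t] by blast
    with growth[of k] pos show False by (simp add: divide_less_eq)
  qed
qed

lemma spectral_radius_of_real_less_1_pow_bounded:
  fixes C :: "real mat"
  assumes C: "C \<in> carrier_mat n n" and rho: "spectral_radius (map_mat complex_of_real C) < 1"
  obtains c where "\<And>k i j. i < n \<Longrightarrow> j < n \<Longrightarrow> (C ^\<^sub>m k) $$ (i,j) \<le> c"
proof -
  obtain c where c: "\<forall>k. norm_bound (map_mat complex_of_real C ^\<^sub>m k) c"
    using spectral_radius_jnf_norm_bound_less_1_upper_triangular[OF _ rho] C by auto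
  have "(C ^\<^sub>m k) $$ (i,j) \<le> c" if "i < n" "j < n" for k i j
  proof -
    have "map_mat complex_of_real C ^\<^sub>m k = map_mat complex_of_real (C ^\<^sub>m k)"
      by (rule of_real_hom.mat_hom_pow[OF C, symmetric])
    moreover have "dim_row C = n" "dim_col C = n" using C by auto
    ultimately show ?thesis
      using c[rule_format, of k] that by (auto simp: norm_bound_def abs_le_iff)
  qed
  then show ?thesis using that by blast
qed

lemma metzler_offdiag_nonneg:
  "metzler A \<Longrightarrow> A \<in> carrier_mat n n \<Longrightarrow> i < n \<Longrightarrow> j < n \<Longrightarrow> i \<noteq> j \<Longrightarrow> A $$ (i,j) \<ge> 0"
  unfolding metzler_def by auto

lemma metzler_hurwitz_nonneg_supersolution_zero:
  fixes A :: "real mat" and y :: "real vec"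
  assumes A: "A \<in> carrier_mat n n" and metz: "metzler A" and hur: "hurwitz A"
    and y: "y \<in> carrier_vec n" and y_nonneg: "\<forall>i<n. y $ i \<ge> 0" and Ay: "\<forall>i<n. (A *\<^sub>v y) $ i \<ge> 0"
  shows "\<forall>i<n. y $ i = 0"
proof (cases "n = 0")
  case False
  have diag_sum: "(\<Sum>i<n. \<bar>A $$ (i,i)\<bar>) \<ge> 0" by (simp add: sum_nonneg)
  then obtain s t where s: "s > (\<Sum>i<n. \<bar>A $$ (i,i)\<bar>)" and t: "t > 1"
    and rho: "spectral_radius (map_mat complex_of_real ((t / s) \<cdot>\<^sub>m (A + s \<cdot>\<^sub>m 1\<^sub>m n))) < 1"
    using hurwitz_smult_shift_spectral_radius[OF A hur] False by blast
  have s_diag: "s + A $$ (i,i) > 0" if "i < n" for i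
  proof -
    have "\<bar>A $$ (i,i)\<bar> \<le> (\<Sum>i<n. \<bar>A $$ (i,i)\<bar>)" using that by (intro member_le_sum) auto
    then show ?thesis using s by linarith
  qed
  have s_pos: "s > 0" using s diag_sum by linarith
  define C where "C = (t / s) \<cdot>\<^sub>m (A + s \<cdot>\<^sub>m 1\<^sub>m n)"
  have C: "C \<in> carrier_mat n n" using A by (simp add: C_def)
  have C_nonneg: "\<forall>i<n. \<forall>j<n. C $$ (i,j) \<ge> 0"
  proof (intro allI impI)
    fix i j assume ij: "i < n" "j < n"
    have "C $$ (i,j) = t / s * (A $$ (i,j) + (if i = j then s else 0))"
      using A ij by (simp add: C_def)
    moreover have "A $$ (i,j) + (if i = j then s else 0) \<ge> 0"
      using metzler_offdiag_nonneg[OF metz A ij] s_diag[OF ij(1)] by auto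
    ultimately show "C $$ (i,j) \<ge> 0" using t s_pos by simp
  qed
  obtain c where bounded: "\<And>k i j. i < n \<Longrightarrow> j < n \<Longrightarrow> (C ^\<^sub>m k) $$ (i,j) \<le> c"
    using spectral_radius_of_real_less_1_pow_bounded[OF C rho[folded C_def]] by blast
  have "\<forall>i<n. (C *\<^sub>v y) $ i \<ge> t * y $ i"
    using Ay t s_pos y A by (simp add: C_def smult_shift_mult_mat_vec field_simps)
  from nonneg_mat_bounded_powers_no_expanding_vec[OF C C_nonneg bounded t y y_nonneg this]
  show ?thesis .
qed simp

lemma metzler_hurwitz_mult_vec_nonneg_imp_nonpos:
  fixes A :: "real mat" and x :: "real vec"
  assumes A: "A \<in> carrier_mat n n" and metz: "metzler A" and hur: "hurwitz A"
    and x: "x \<in> carrier_vec n" and Ax: "\<forall>i<n. (A *\<^sub>v x) $ i \<ge> 0"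
  shows "\<forall>i<n. x $ i \<le> 0"
proof -
  define y where "y = vec n (\<lambda>i. max (x $ i) 0)"
  have y: "y \<in> carrier_vec n" by (simp add: y_def)
  have "(A *\<^sub>v y) $ i \<ge> 0" if i: "i < n" for i
  proof (cases "x $ i > 0")
    case True
    have "0 \<le> (\<Sum>k<n. A $$ (i,k) * x $ k)" using Ax i mult_mat_vec_index_sum[OF A x i] by metis
    also have "\<dots> \<le> (\<Sum>k<n. A $$ (i,k) * y $ k)"
    proof (rule sum_mono)
      fix k assume "k \<in> {..<n}"
      then show "A $$ (i,k) * x $ k \<le> A $$ (i,k) * y $ k"
        using True metzler_offdiag_nonneg[OF metz A i, of k]
        by (cases "k = i") (auto simp: y_def intro: mult_left_mono)
    qed
    finally show ?thesis using mult_mat_vec_index_sum[OF A y i] by simp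
  next
    case False
    have "0 \<le> (\<Sum>k<n. A $$ (i,k) * y $ k)"
    proof (rule sum_nonneg)
      fix k assume "k \<in> {..<n}"
      then show "0 \<le> A $$ (i,k) * y $ k"
        using False metzler_offdiag_nonneg[OF metz A i, of k] by (cases "k = i") (auto simp: y_def)
    qed
    then show ?thesis using mult_mat_vec_index_sum[OF A y i] by simp
  qed
  with metzler_hurwitz_nonneg_supersolution_zero[OF A metz hur y] show ?thesis
    by (auto simp: y_def)
qed

lemma minv_metzler_hurwitz:
  fixes A :: "real mat"
  assumes A: "A \<in> carrier_mat n n" and metz: "metzler A" and hur: "hurwitz A"
  shows "minv A \<in> carrier_mat n n" "A * minv A = 1\<^sub>m n" "minv A * A = 1\<^sub>m n"
proof -
  have "det A \<noteq> 0"
  proof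
    assume "det A = 0"
    then obtain x where x: "x \<in> carrier_vec n" "x \<noteq> 0\<^sub>v n" "A *\<^sub>v x = 0\<^sub>v n"
      using det_0_iff_vec_prod_zero[OF A] by auto
    have "A *\<^sub>v ((-1) \<cdot>\<^sub>v x) = (-1) \<cdot>\<^sub>v (A *\<^sub>v x)" by (rule mult_mat_vec[OF A x(1)])
    also have "\<dots> = 0\<^sub>v n" using x(3) by (intro eq_vecI) auto
    finally have "A *\<^sub>v ((-1) \<cdot>\<^sub>v x) = 0\<^sub>v n" .
    then have "\<forall>i<n. - x $ i \<le> 0"
      using metzler_hurwitz_mult_vec_nonneg_imp_nonpos[OF A metz hur, of "(-1) \<cdot>\<^sub>v x"] x by auto
    moreover have "\<forall>i<n. x $ i \<le> 0"
      using metzler_hurwitz_mult_vec_nonneg_imp_nonpos[OF A metz hur x(1)] x by auto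
    ultimately have "x = 0\<^sub>v n" using x by (intro eq_vecI) (auto intro: antisym)
    with x show False by simp
  qed
  from det_non_zero_imp_unit[OF A this, of undefined]
  obtain B where "B \<in> carrier_mat n n" "A * B = 1\<^sub>m n" "B * A = 1\<^sub>m n"
    unfolding Units_def ring_mat_def by auto
  then have "\<exists>B. B \<in> carrier_mat (dim_row A) (dim_row A) \<and> A * B = 1\<^sub>m (dim_row A) \<and> B * A = 1\<^sub>m (dim_row A)"
    using A by auto
  from someI_ex[OF this] A show "minv A \<in> carrier_mat n n" "A * minv A = 1\<^sub>m n" "minv A * A = 1\<^sub>m n"
    unfolding minv_def by auto
qed

lemma minv_metzler_hurwitz_diag_neg:
  fixes A :: "real mat"
  assumes A: "A \<in> carrier_mat n n" and metz: "metzler A" and hur: "hurwitz A" and j: "j < n"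
  shows "minv A $$ (j,j) < 0"
proof -
  note M = minv_metzler_hurwitz[OF A metz hur]
  define w where "w = minv A *\<^sub>v unit_vec n j"
  have w: "w \<in> carrier_vec n" using M(1) by (simp add: w_def)
  have Aw: "A *\<^sub>v w = unit_vec n j"
    unfolding w_def using assoc_mult_mat_vec[OF A M(1), of "unit_vec n j"] M(2) by simp
  have w_nonpos: "\<forall>i<n. w $ i \<le> 0"
    using metzler_hurwitz_mult_vec_nonneg_imp_nonpos[OF A metz hur w] unfolding Aw
    by (simp add: unit_vec_def)
  have wj: "w $ j = minv A $$ (j,j)" using M(1) j by (simp add: w_def)
  have "w $ j \<noteq> 0"
  proof
    assume w0: "w $ j = 0"
    have "1 = (\<Sum>k<n. A $$ (j,k) * w $ k)"
      using mult_mat_vec_index_sum[OF A w j] Aw j by simp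
    also have "\<dots> \<le> 0"
    proof (rule sum_nonpos)
      fix k assume "k \<in> {..<n}"
      then show "A $$ (j,k) * w $ k \<le> 0"
        using w0 w_nonpos metzler_offdiag_nonneg[OF metz A j, of k]
        by (cases "k = j") (auto simp: mult_nonneg_nonpos)
    qed
    finally show False by simp
  qed
  with w_nonpos j wj show ?thesis by force
qed

lemma metzler_row_cmod_le:
  fixes A :: "real mat" and v :: "nat \<Rightarrow> complex"
  assumes A: "A \<in> carrier_mat n n" and metz: "metzler A" and i: "i < n"
    and row: "l * v i = (\<Sum>k<n. complex_of_real (A $$ (i,k)) * v k) + f"
  shows "cmod ((l - A $$ (i,i)) * v i - f) \<le> (\<Sum>k<n. A $$ (i,k) * cmod (v k)) - A $$ (i,i) * cmod (v i)"
proof -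
  let ?R = "{..<n} - {i}"
  have "(l - A $$ (i,i)) * v i - f = (\<Sum>k\<in>?R. complex_of_real (A $$ (i,k)) * v k)"
    using row i by (simp add: sum.remove[of "{..<n}" i] algebra_simps)
  also have "cmod \<dots> \<le> (\<Sum>k\<in>?R. cmod (complex_of_real (A $$ (i,k)) * v k))"
    by (rule norm_sum)
  also have "\<dots> = (\<Sum>k\<in>?R. A $$ (i,k) * cmod (v k))"
    using metzler_offdiag_nonneg[OF metz A i] by (intro sum.cong) (auto simp: norm_mult)
  also have "\<dots> = (\<Sum>k<n. A $$ (i,k) * cmod (v k)) - A $$ (i,i) * cmod (v i)"
    using i by (simp add: sum.remove[of "{..<n}" i])
  finally show ?thesis .
qed

lemma metzler_eigen_row_cmod_nonneg:
  fixes A :: "real mat" and v :: "nat \<Rightarrow> complex"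
  assumes A: "A \<in> carrier_mat n n" and metz: "metzler A" and i: "i < n" and l: "Re l \<ge> 0"
    and row: "l * v i = (\<Sum>k<n. complex_of_real (A $$ (i,k)) * v k)"
  shows "(\<Sum>k<n. A $$ (i,k) * cmod (v k)) \<ge> 0"
proof -
  have "cmod ((l - A $$ (i,i)) * v i - 0) \<le> (\<Sum>k<n. A $$ (i,k) * cmod (v k)) - A $$ (i,i) * cmod (v i)"
    using row by (intro metzler_row_cmod_le[OF A metz i]) simp
  moreover have "- A $$ (i,i) \<le> cmod (l - A $$ (i,i))"
    using l complex_Re_le_cmod[of "l - A $$ (i,i)"] by simp
  ultimately show ?thesis
    using mult_right_mono[of "- A $$ (i,i)" "cmod (l - A $$ (i,i))" "cmod (v i)"] by (simp add: norm_mult)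
qed

lemma Re_of_real_divide_pos: "a > 0 \<Longrightarrow> Re z > 0 \<Longrightarrow> Re (complex_of_real a / z) > 0"
  by (simp add: Re_divide sum_power2_gt_zero_iff)

lemma Re_mult_divide_add_nonneg:
  assumes "d > 0" "c > 0" "Re l \<ge> 0"
  shows "Re (l * complex_of_real d / (l + complex_of_real c)) \<ge> 0"
proof -
  have "0 \<le> Re l * d * (Re l + c)" "0 \<le> Im l * d * Im l"
    using assms by (simp_all add: mult.commute mult.left_commute)
  then show ?thesis by (simp add: Re_divide)
qed

lemma integral_loop_no_unstable_solution:
  fixes l v p q :: complex and a u c d g theta :: real
  assumes u: "u > 0" and c: "c > 0" and d: "d > 0" and g: "g > 0" and theta: "theta > 0"
    and l: "Re l \<ge> 0" and v: "v \<noteq> 0"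
    and row_v: "cmod ((l - complex_of_real a + complex_of_real u) * v + complex_of_real g * q) < - a * cmod v"
    and p: "(l + complex_of_real c) * p = - (complex_of_real d * q)"
    and q: "l * (q - p) = complex_of_real theta * v"
  shows False
proof -
  define \<Phi> where "\<Phi> = - (complex_of_real g * q) / v"
  have \<Phi>: "Re \<Phi> > 0"
  proof -
    let ?S = "(l - complex_of_real a + complex_of_real u) * v + complex_of_real g * q"
    have "\<Phi> = l - complex_of_real a + complex_of_real u - ?S / v"
      using v by (simp add: \<Phi>_def field_simps)
    moreover have "cmod ?S / cmod v < - a" using row_v v by (simp add: divide_less_eq)
    moreover have "Re (?S / v) \<le> cmod ?S / cmod v"
      using complex_Re_le_cmod[of "?S / v"] by (simp add: norm_divide)
    ultimately show ?thesis using l u by simp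
  qed
  have lc: "l + complex_of_real c \<noteq> 0"
  proof
    assume "l + complex_of_real c = 0"
    then have "Re (l + complex_of_real c) = 0" by simp
    with l c show False by simp
  qed
  have \<Phi>0: "\<Phi> \<noteq> 0" using \<Phi> by auto
  have q0: "q \<noteq> 0" using \<Phi>0 by (auto simp: \<Phi>_def)
  have p_eq: "p = - (complex_of_real d * q) / (l + complex_of_real c)"
    using p lc by (simp add: field_simps)
  have v_eq: "v = - (complex_of_real g * q) / \<Phi>" using v \<Phi>0 by (simp add: \<Phi>_def field_simps)
  let ?X = "complex_of_real (theta * g) / \<Phi>" and ?Y = "l * complex_of_real d / (l + complex_of_real c)"
  have "q * (?X + l + ?Y) = - (complex_of_real theta * v) + l * q - l * p"
    unfolding p_eq v_eq using lc \<Phi>0 by (simp add: field_simps)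
  also have "\<dots> = 0" using q by (simp add: algebra_simps)
  finally have sum0: "?X + l + ?Y = 0" using q0 by simp
  have "Re ?X > 0" by (rule Re_of_real_divide_pos) (use \<Phi> theta g in auto)
  then have "Re (?X + l + ?Y) > 0"
    using Re_mult_divide_add_nonneg[OF d c l] l by simp
  with sum0 show False by simp
qed

lemma metzler_hurwitz_eigen_rows_except_one_zero:
  fixes A :: "real mat" and v :: "nat \<Rightarrow> complex"
  assumes A: "A \<in> carrier_mat n n" and metz: "metzler A" and hur: "hurwitz A"
    and N: "N < n" and l: "Re l \<ge> 0"
    and rows: "\<forall>i<n. i \<noteq> N \<longrightarrow> l * v i = (\<Sum>k<n. complex_of_real (A $$ (i,k)) * v k)"
    and row_N: "(\<Sum>k<n. A $$ (N,k) * cmod (v k)) \<ge> 0"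
  shows "\<forall>k<n. v k = 0"
proof -
  define y where "y = vec n (\<lambda>k. cmod (v k))"
  have y: "y \<in> carrier_vec n" and y_nonneg: "\<forall>i<n. y $ i \<ge> 0" by (simp_all add: y_def)
  have "\<forall>i<n. (A *\<^sub>v y) $ i \<ge> 0"
  proof (intro allI impI)
    fix i assume i: "i < n"
    have "(A *\<^sub>v y) $ i = (\<Sum>k<n. A $$ (i,k) * cmod (v k))"
      using mult_mat_vec_index_sum[OF A y i] by (simp add: y_def)
    then show "(A *\<^sub>v y) $ i \<ge> 0"
      using row_N rows i metzler_eigen_row_cmod_nonneg[OF A metz i l] by (cases "i = N") auto
  qed
  from metzler_hurwitz_nonneg_supersolution_zero[OF A metz hur y y_nonneg this]
  show ?thesis by (simp add: y_def)
qed

lemma closed_loop_unstable_eigenvector_zero: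
  fixes A :: "real mat" and v :: "nat \<Rightarrow> complex"
  assumes A: "A \<in> carrier_mat n n" and metz: "metzler A" and hur: "hurwitz A" and n: "n \<ge> 1"
    and u: "u > 0" and c: "c > 0" and d: "d > 0" and g: "g > 0" and theta: "theta > 0"
    and l: "Re l \<ge> 0"
    and rows: "\<forall>i<n. l * v i = (\<Sum>k<n. complex_of_real (A $$ (i,k)) * v k)
         - (if i = n-1 then complex_of_real u * v (n-1) + complex_of_real g * q else 0)"
    and row_p: "l * p = - (complex_of_real c * p + complex_of_real d * q)"
    and row_q: "l * q = complex_of_real theta * v (n-1) - (complex_of_real c * p + complex_of_real d * q)"
  shows "(\<forall>k<n. v k = 0) \<and> p = 0 \<and> q = 0"
proof -
  define N where "N = n - 1"
  have N: "N < n" using n by (simp add: N_def)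
  have "\<forall>i<n. i \<noteq> N \<longrightarrow> l * v i = (\<Sum>k<n. complex_of_real (A $$ (i,k)) * v k)"
    using rows by (simp add: N_def)
  note v_zero = metzler_hurwitz_eigen_rows_except_one_zero[OF A metz hur N l this]
  define S where "S = (l - A $$ (N,N) + u) * v N + g * q"
  have "l * v N = (\<Sum>k<n. complex_of_real (A $$ (N,k)) * v k) + - (u * v N + g * q)"
    using rows N by (simp add: N_def)
  from metzler_row_cmod_le[OF A metz N this]
  have S: "cmod S \<le> (\<Sum>k<n. A $$ (N,k) * cmod (v k)) - A $$ (N,N) * cmod (v N)"
    unfolding S_def by (simp add: algebra_simps)
  have vN: "v N = 0"
  proof (rule ccontr)
    assume vN: "v N \<noteq> 0"
    have "\<not> (\<Sum>k<n. A $$ (N,k) * cmod (v k)) \<ge> 0"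
    proof
      assume "(\<Sum>k<n. A $$ (N,k) * cmod (v k)) \<ge> 0"
      from v_zero[OF this] N vN show False by simp
    qed
    then have "cmod S < - A $$ (N,N) * cmod (v N)" using S by linarith
    moreover have "(l + c) * p = - (d * q)"
      unfolding distrib_right row_p by (simp add: algebra_simps)
    moreover have "l * (q - p) = theta * v N"
      unfolding right_diff_distrib row_q row_p N_def by (simp add: algebra_simps)
    ultimately show False
      using integral_loop_no_unstable_solution[OF u c d g theta l vN] unfolding S_def by blast
  qed
  then have "cmod S \<le> (\<Sum>k<n. A $$ (N,k) * cmod (v k))" using S by simp
  then have "(\<Sum>k<n. A $$ (N,k) * cmod (v k)) \<ge> 0" using norm_ge_zero[of S] by linarith
  then have v0: "\<forall>k<n. v k = 0" by (rule v_zero)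
  then have q0: "q = 0" using rows N g by (auto simp: N_def)
  have "(l + c) * p = 0" unfolding distrib_right using row_p q0 by simp
  moreover have "Re (l + c) > 0" using l c by simp
  then have "l + c \<noteq> 0" by (metis less_irrefl zero_complex.sel(1))
  ultimately show ?thesis using v0 q0 by simp
qed

definition field_jacobian :: "nat \<Rightarrow> real mat \<Rightarrow> real \<Rightarrow> real \<Rightarrow> real \<Rightarrow> real vec \<Rightarrow> real mat" where
  "field_jacobian n A theta eta kp w = mat (n+2) (n+2) (\<lambda>(i,j).
     if i < n then (if j < n then A $$ (i,j) else 0)
       - (if i = n-1 then kp * ((if j = n-1 then w $ (n+1) else 0) + (if j = n+1 then w $ (n-1) else 0)) else 0)
     else (if i = n+1 \<and> j = n-1 then theta else 0)
       - kp * eta * ((if j = n then w $ (n+1) else 0) + (if j = n+1 then w $ n else 0)))"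

lemma field_nth:
  assumes A: "A \<in> carrier_mat n n" and i: "i < n+2"
  shows "field n A b0 mu theta eta kp w $ i =
    (if i < n then (\<Sum>k<n. A $$ (i,k) * w $ k) - kp * w $ (n-1) * w $ (n+1) * (if i = n-1 then 1 else 0) + b0 $ i
     else if i = n then mu - kp * eta * w $ n * w $ (n+1)
     else theta * w $ (n-1) - kp * eta * w $ n * w $ (n+1))"
  using i by (auto simp: field_def Let_def mult_mat_vec_index_sum[OF A] intro!: sum.cong)

lemma field_eq_zero_iff:
  fixes w :: "real vec"
  assumes A: "A \<in> carrier_mat n n" and b0: "b0 \<in> carrier_vec n"
  shows "field n A b0 mu theta eta kp w = 0\<^sub>v (n+2) \<longleftrightarrow>
    A *\<^sub>v vec n (\<lambda>k. w $ k) = (kp * w $ (n-1) * w $ (n+1)) \<cdot>\<^sub>v unit_vec n (n-1) - b0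
    \<and> mu = kp * eta * w $ n * w $ (n+1) \<and> theta * w $ (n-1) = kp * eta * w $ n * w $ (n+1)"
proof -
  let ?x = "vec n (\<lambda>k. w $ k)" and ?c = "kp * w $ (n-1) * w $ (n+1)"
  have split: "(\<forall>i<n+2. P i) \<longleftrightarrow> (\<forall>i<n. P i) \<and> P n \<and> P (n+1)" for P
    by (auto simp: less_Suc_eq)
  have "field n A b0 mu theta eta kp w = 0\<^sub>v (n+2) \<longleftrightarrow> (\<forall>i<n+2. field n A b0 mu theta eta kp w $ i = 0)"
    by (simp add: vec_eq_iff field_def Let_def)
  also have "\<dots> \<longleftrightarrow> (\<forall>i<n. (A *\<^sub>v ?x) $ i = (?c \<cdot>\<^sub>v unit_vec n (n-1) - b0) $ i)
      \<and> mu = kp * eta * w $ n * w $ (n+1) \<and> theta * w $ (n-1) = kp * eta * w $ n * w $ (n+1)"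
    unfolding split using b0 by (auto simp: field_def Let_def)
  also have "(\<forall>i<n. (A *\<^sub>v ?x) $ i = (?c \<cdot>\<^sub>v unit_vec n (n-1) - b0) $ i) \<longleftrightarrow>
      A *\<^sub>v ?x = ?c \<cdot>\<^sub>v unit_vec n (n-1) - b0"
    using A b0 by (simp add: vec_eq_iff)
  finally show ?thesis .
qed

lemma field_line_has_derivative:
  fixes w e :: "real vec"
  assumes A: "A \<in> carrier_mat n n" and i: "i < n+2"
    and w: "w \<in> carrier_vec (n+2)" and e: "e \<in> carrier_vec (n+2)"
  shows "((\<lambda>t. field n A b0 mu theta eta kp (w + t \<cdot>\<^sub>v e) $ i) has_real_derivative
     (if i < n then (\<Sum>k<n. A $$ (i,k) * e $ k)
        - kp * (e $ (n-1) * w $ (n+1) + w $ (n-1) * e $ (n+1)) * (if i = n-1 then 1 else 0)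
      else if i = n then - kp * eta * (e $ n * w $ (n+1) + w $ n * e $ (n+1))
      else theta * e $ (n-1) - kp * eta * (e $ n * w $ (n+1) + w $ n * e $ (n+1)))) (at 0)"
proof -
  have dims: "dim_vec w = n+2" "dim_vec e = n+2" using w e by auto
  have pointwise: "field n A b0 mu theta eta kp (w + t \<cdot>\<^sub>v e) $ i =
     (if i < n then (\<Sum>k<n. A $$ (i,k) * (w $ k + t * e $ k))
         - kp * (w $ (n-1) + t * e $ (n-1)) * (w $ (n+1) + t * e $ (n+1)) * (if i = n-1 then 1 else 0) + b0 $ i
      else if i = n then mu - kp * eta * (w $ n + t * e $ n) * (w $ (n+1) + t * e $ (n+1))
      else theta * (w $ (n-1) + t * e $ (n-1)) - kp * eta * (w $ n + t * e $ n) * (w $ (n+1) + t * e $ (n+1)))"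
    for t
  proof -
    have "(\<Sum>k<n. A $$ (i,k) * (w + t \<cdot>\<^sub>v e) $ k) = (\<Sum>k<n. A $$ (i,k) * (w $ k + t * e $ k))"
      using dims by (intro sum.cong) auto
    then show ?thesis unfolding field_nth[OF A i] using dims by simp
  qed
  show ?thesis
    unfolding pointwise by (cases "i < n"; cases "i = n") (auto intro!: derivative_eq_intros simp: algebra_simps)
qed

lemma jacobian_field:
  fixes w :: "real vec"
  assumes n: "n \<ge> 1" and A: "A \<in> carrier_mat n n" and w: "w \<in> carrier_vec (n+2)"
  shows "jacobian (field n A b0 mu theta eta kp) w = field_jacobian n A theta eta kp w"
proof (rule eq_matI)
  fix i j
  assume "i < dim_row (field_jacobian n A theta eta kp w)" "j < dim_col (field_jacobian n A theta eta kp w)"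
  then have i: "i < n+2" and j: "j < n+2" by (simp_all add: field_jacobian_def)
  have "(\<Sum>k<n. A $$ (i,k) * unit_vec (n+2) j $ k) = (\<Sum>k<n. if k = j then A $$ (i,j) else 0)"
    using j by (intro sum.cong) auto
  then have "(\<Sum>k<n. A $$ (i,k) * unit_vec (n+2) j $ k) = (if j < n then A $$ (i,j) else 0)"
    by simp
  with DERIV_imp_deriv[OF field_line_has_derivative[OF A i w unit_vec_carrier]]
  show "jacobian (field n A b0 mu theta eta kp) w $$ (i,j) = field_jacobian n A theta eta kp w $$ (i,j)"
    using i j n w by (auto simp: jacobian_def field_jacobian_def)
qed (use w in \<open>simp_all add: jacobian_def field_jacobian_def\<close>)

lemma field_jacobian_eigenvector_rows:
  fixes V :: "complex vec"
  assumes n: "n \<ge> 1" and A: "A \<in> carrier_mat n n" and V: "V \<in> carrier_vec (n+2)"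
    and ev: "map_mat complex_of_real (field_jacobian n A theta eta kp w) *\<^sub>v V = l \<cdot>\<^sub>v V"
  shows "\<forall>i<n. l * V $ i = (\<Sum>k<n. complex_of_real (A $$ (i,k)) * V $ k)
           - (if i = n-1 then complex_of_real (kp * w $ (n+1)) * V $ (n-1)
                + complex_of_real (kp * w $ (n-1)) * V $ (n+1) else 0)" (is "\<forall>i<n. ?x_row i")
    and "l * V $ n = - (complex_of_real (kp * eta * w $ (n+1)) * V $ n
           + complex_of_real (kp * eta * w $ n) * V $ (n+1))" (is ?z1_row)
    and "l * V $ (n+1) = complex_of_real theta * V $ (n-1)
           - (complex_of_real (kp * eta * w $ (n+1)) * V $ n + complex_of_real (kp * eta * w $ n) * V $ (n+1))"
      (is ?z2_row)
proof -
  let ?J = "map_mat complex_of_real (field_jacobian n A theta eta kp w)"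
  have J: "?J \<in> carrier_mat (n+2) (n+2)" by (simp add: field_jacobian_def)
  have row: "l * V $ i = (\<Sum>k<n. ?J $$ (i,k) * V $ k) + ?J $$ (i,n) * V $ n + ?J $$ (i,n+1) * V $ (n+1)"
    if "i < n+2" for i
    using arg_cong[OF ev, of "\<lambda>u. u $ i"] mult_mat_vec_index_sum[OF J V that] V that by simp
  have N: "n - 1 < n" using n by simp
  show "\<forall>i<n. ?x_row i"
  proof (intro allI impI)
    fix i assume i: "i < n"
    have "(\<Sum>k<n. ?J $$ (i,k) * V $ k) = (\<Sum>k<n. complex_of_real (A $$ (i,k)) * V $ k
        - (if k = n-1 then (if i = n-1 then complex_of_real (kp * w $ (n+1)) * V $ k else 0) else 0))"
      using i n by (intro sum.cong) (auto simp: field_jacobian_def algebra_simps)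
    also have "\<dots> = (\<Sum>k<n. complex_of_real (A $$ (i,k)) * V $ k)
        - (if i = n-1 then complex_of_real (kp * w $ (n+1)) * V $ (n-1) else 0)"
      using N by (simp add: sum_subtractf)
    finally show "?x_row i" using row[of i] i N by (simp add: field_jacobian_def)
  qed
  have "(\<Sum>k<n. ?J $$ (n,k) * V $ k) = 0" by (intro sum.neutral) (auto simp: field_jacobian_def)
  then show ?z1_row using row[of n] by (simp add: field_jacobian_def)
  have "(\<Sum>k<n. ?J $$ (n+1,k) * V $ k) = (\<Sum>k<n. if k = n-1 then complex_of_real theta * V $ k else 0)"
    by (intro sum.cong) (auto simp: field_jacobian_def)
  also have "\<dots> = complex_of_real theta * V $ (n-1)" using N by simp
  finally show ?z2_row using row[of "n+1"] N by (simp add: field_jacobian_def)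
qed

locale integral_feedback =
  fixes n :: nat and A :: "real mat" and b0 :: "real vec" and mu theta eta kp :: real
  assumes n_pos: "n \<ge> 1" and A: "A \<in> carrier_mat n n" and metz: "metzler A" and hur: "hurwitz A"
    and b0: "b0 \<in> carrier_vec n" and mu: "mu > 0" and theta: "theta > 0"
    and eta: "eta > 0" and kp: "kp > 0"
    and r_less_g0: "mu / theta < - (minv A *\<^sub>v b0) $ (n-1)"
begin

definition r :: real where "r = mu / theta"
definition g0 :: real where "g0 = - (minv A *\<^sub>v b0) $ (n-1)"
definition gn :: real where "gn = - (minv A $$ (n-1, n-1))"
definition u_star :: real where "u_star = (g0 - r) / (gn * r)"

text \<open>The steady state of the x-subsystem under the constant input c = kp x_n z_2.\<close>

definition x_steady :: "real \<Rightarrow> real vec" where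
  "x_steady c = - (minv A *\<^sub>v (b0 - c \<cdot>\<^sub>v unit_vec n (n-1)))"

definition equilibrium :: "real vec" where
  "equilibrium = vec (n+2) (\<lambda>i. if i < n then x_steady (r * u_star) $ i
                              else if i = n then mu / (eta * u_star) else u_star / kp)"

lemmas A_inverse = minv_metzler_hurwitz[OF A metz hur]

lemma last_less: "n - 1 < n"
  using n_pos by simp

lemma r_pos: "r > 0"
  using mu theta by (simp add: r_def)

lemma gn_pos: "gn > 0"
  using minv_metzler_hurwitz_diag_neg[OF A metz hur last_less] by (simp add: gn_def)

lemma u_star_pos: "u_star > 0"
proof -
  have "r < g0" using r_less_g0 by (simp add: r_def g0_def)
  then show ?thesis unfolding u_star_def using gn_pos r_pos by simp
qed

lemma dim_x_steady [simp]: "dim_vec (x_steady c) = n"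
  using A_inverse(1) by (simp add: x_steady_def)

lemma x_steady_nth: "k < n \<Longrightarrow> x_steady c $ k = c * minv A $$ (k, n-1) - (minv A *\<^sub>v b0) $ k"
  using A_inverse(1) b0 last_less by (simp add: x_steady_def mult_minus_distrib_mat_vec mult_mat_vec)

lemma x_steady_last: "x_steady c $ (n-1) = g0 - c * gn"
  using x_steady_nth[OF last_less] by (simp add: g0_def gn_def)

lemma A_mult_x_steady: "A *\<^sub>v x_steady c = c \<cdot>\<^sub>v unit_vec n (n-1) - b0"
proof -
  let ?u = "b0 - c \<cdot>\<^sub>v unit_vec n (n-1)"
  have u: "?u \<in> carrier_vec n" using b0 by simp
  have "A *\<^sub>v (minv A *\<^sub>v ?u) = ?u"
    using assoc_mult_mat_vec[OF A A_inverse(1) u] A_inverse(2) u by simp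
  moreover have "A *\<^sub>v (- v) = - (A *\<^sub>v v)" if "v \<in> carrier_vec n" for v :: "real vec"
    using A that by (intro eq_vecI) auto
  ultimately have "A *\<^sub>v x_steady c = - ?u" using A_inverse(1) u by (simp add: x_steady_def)
  then show ?thesis using b0 by (intro eq_vecI) auto
qed

lemma x_steady_unique:
  fixes x :: "real vec"
  assumes x: "x \<in> carrier_vec n" and Ax: "A *\<^sub>v x = c \<cdot>\<^sub>v unit_vec n (n-1) - b0"
  shows "x = x_steady c"
proof -
  have "x = minv A *\<^sub>v (c \<cdot>\<^sub>v unit_vec n (n-1) - b0)"
    using assoc_mult_mat_vec[OF A_inverse(1) A x] A_inverse(3) x by (simp add: Ax)
  then show ?thesis
    using A_inverse(1) b0 last_less x by (intro eq_vecI) (auto simp: x_steady_nth mult_minus_distrib_mat_vec mult_mat_vec)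
qed

lemma equilibria: "{w \<in> carrier_vec (n+2). field n A b0 mu theta eta kp w = 0\<^sub>v (n+2)} = {equilibrium}"
proof -
  have eq_x: "vec n (\<lambda>k. equilibrium $ k) = x_steady (r * u_star)"
    using A_inverse(1) by (intro eq_vecI) (auto simp: equilibrium_def x_steady_def)
  have eq_last: "equilibrium $ (n-1) = r"
    using x_steady_last gn_pos r_pos last_less by (simp add: equilibrium_def u_star_def)
  have "field n A b0 mu theta eta kp equilibrium = 0\<^sub>v (n+2)"
    using A_mult_x_steady eq_x eq_last kp eta u_star_pos theta
    by (subst field_eq_zero_iff[OF A b0]) (auto simp: equilibrium_def r_def)
  moreover have "w = equilibrium"
    if w: "w \<in> carrier_vec (n+2)" and zero: "field n A b0 mu theta eta kp w = 0\<^sub>v (n+2)" for w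
  proof -
    define c where "c = kp * w $ (n-1) * w $ (n+1)"
    note eqs = zero[unfolded field_eq_zero_iff[OF A b0], folded c_def]
    have "theta * w $ (n-1) = mu" using eqs by simp
    then have w_last: "w $ (n-1) = r" using theta by (simp add: r_def field_simps)
    have x: "vec n (\<lambda>k. w $ k) = x_steady c" using eqs by (intro x_steady_unique) auto
    then have "r = g0 - c * gn" using x_steady_last w_last last_less by (metis index_vec)
    then have "c = (g0 - r) / gn" using gn_pos by (simp add: field_simps)
    also have "\<dots> = r * u_star" using r_pos by (simp add: u_star_def)
    finally have c: "c = r * u_star" .
    then have z2: "w $ (n+1) = u_star / kp" using w_last r_pos kp by (simp add: c_def field_simps)
    then have z1: "w $ n = mu / (eta * u_star)" using eqs kp eta u_star_pos by (simp add: field_simps)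
    show ?thesis
    proof (rule eq_vecI)
      fix i assume "i < dim_vec equilibrium"
      then consider "i < n" | "i = n" | "i = n+1" by (fastforce simp: equilibrium_def)
      then show "w $ i = equilibrium $ i"
        using arg_cong[OF x, of "\<lambda>x. x $ i"] c z1 z2 by cases (auto simp: equilibrium_def)
    qed (use w in \<open>simp add: equilibrium_def\<close>)
  qed
  ultimately show ?thesis by (auto simp: equilibrium_def)
qed

lemma jacobian_hurwitz: "hurwitz (jacobian (field n A b0 mu theta eta kp) equilibrium)"
proof -
  let ?J = "field_jacobian n A theta eta kp equilibrium"
  have J: "jacobian (field n A b0 mu theta eta kp) equilibrium = ?J"
    by (rule jacobian_field[OF n_pos A]) (simp add: equilibrium_def)
  have "Re l < 0" if ev: "eigenvalue (map_mat complex_of_real ?J) l" for l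
  proof (rule ccontr)
    assume "\<not> Re l < 0"
    then have l: "Re l \<ge> 0" by simp
    have dim: "dim_row (map_mat complex_of_real ?J) = n+2" by (simp add: field_jacobian_def)
    obtain V where V: "V \<in> carrier_vec (n+2)" "V \<noteq> 0\<^sub>v (n+2)" "map_mat complex_of_real ?J *\<^sub>v V = l \<cdot>\<^sub>v V"
      using ev unfolding eigenvalue_def eigenvector_def dim by blast
    have vals: "kp * equilibrium $ (n+1) = u_star" "kp * eta * equilibrium $ (n+1) = eta * u_star"
      "kp * eta * equilibrium $ n = kp * mu / u_star" "equilibrium $ (n-1) = r"
      using kp eta u_star_pos x_steady_last gn_pos r_pos last_less by (simp_all add: equilibrium_def u_star_def)
    note rows = field_jacobian_eigenvector_rows[OF n_pos A V(1,3), unfolded vals]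
    have pos: "eta * u_star > 0" "kp * mu / u_star > 0" "kp * r > 0"
      using eta u_star_pos kp mu r_pos by simp_all
    have "(\<forall>k<n. V $ k = 0) \<and> V $ n = 0 \<and> V $ (n+1) = 0"
      by (rule closed_loop_unstable_eigenvector_zero[OF A metz hur n_pos u_star_pos pos theta l rows])
    then have "V = 0\<^sub>v (n+2)"
      using V(1) by (intro eq_vecI) (auto simp: less_Suc_eq)
    with V(2) show False by simp
  qed
  moreover have "dim_row ?J = dim_col ?J" by (simp add: field_jacobian_def)
  ultimately show ?thesis unfolding hurwitz_def J by blast
qed

end

theorem mainTheorem9:
  fixes n :: nat and A :: "real mat" and b0 :: "real vec" and mu theta :: real
  assumes n: "n \<ge> 1"
    and A: "A \<in> carrier_mat n n" and metz: "metzler A" and hur: "hurwitz A"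
    and b0: "b0 \<in> carrier_vec n" and b0_nonneg: "\<forall>i < n. b0 $ i \<ge> 0"
    and mu: "mu > 0" and theta: "theta > 0"
    and r_lt: "mu / theta < - (minv A *\<^sub>v b0) $ (n-1)"
  shows "\<forall>eta kp. eta > 0 \<longrightarrow> kp > 0 \<longrightarrow>
    (let r = mu / theta;
         g0 = - (minv A *\<^sub>v b0) $ (n-1);
         gn = - (minv A $$ (n-1, n-1));
         us = (g0 - r) / (gn * r);
         xs = - (minv A *\<^sub>v (b0 - (r * us) \<cdot>\<^sub>v unit_vec n (n-1)));
         eq = vec (n+2) (\<lambda>i. if i < n then xs $ i
                               else if i = n then mu / (eta * us) else us / kp)
     in {w \<in> carrier_vec (n+2). field n A b0 mu theta eta kp w = 0\<^sub>v (n+2)} = {eq}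
        \<and> hurwitz (jacobian (field n A b0 mu theta eta kp) eq))"
proof (intro allI impI, goal_cases)
  case (1 eta kp)
  then interpret integral_feedback n A b0 mu theta eta kp
    using assms by unfold_locales
  show ?case
    unfolding Let_def r_def[symmetric] g0_def[symmetric] gn_def[symmetric] u_star_def[symmetric]
      x_steady_def[symmetric] equilibrium_def[symmetric]
    using equilibria jacobian_hurwitz ..
qed

end
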